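(* Let $R$ be a unital ring and let $(P,Q,\psi)$ be a unital $R$-system satisfying Condition (FS'). Let $J\subseteq R$ be a $\psi$-compatible ideal such that (a) $1_R\in J$ and (b) $\psi$ is surjective. Then the relative Cuntz–Pimsner ring $\mathcal{O}_{(P,Q,\psi)}(J)$ is strongly $\mathbb{Z}$-graded.
   Context: A $\mathbb{Z}$-graded ring $B=\bigoplus_iB_i$ is strongly graded if $B_mB_n=B_{m+n}$ for all $m,n$. An $R$-system is a triple $(P,Q,\psi)$ with $P,Q$ $R$-bimodules and $\psi:P\otimes_RQ\to R$ an $R$-bimodule homomorphism; it is unital if $R$ is unital and $1_R$ acts as identity on both sides of $P$ and $Q$. Put $P^{\otimes0}=Q^{\otimes0}=R$, $Q^{\otimes n}=Q^{\otimes(n-1)}\otimes_RQ$, $P^{\otimes n}=P\otimes_RP^{\otimes(n-1)}$. A covariant representation of $(P,Q,\psi)$ is a tuple $(S,T,\sigma,B)$ with $B$ a ring, $S:P\to B$, $T:Q\to B$ additive, $\sigma:R\to B$ a ring homomorphism, with $S(pr)=S(p)\sigma(r)$, $S(rp)=\sigma(r)S(p)$, $T(qr)=T(q)\sigma(r)$, $T(rq)=\sigma(r)T(q)$, $\sigma(\psi(p\otimes q))=S(p)T(q)$. For $q\in Q,p\in P$ let $\theta_{q,p}(x)=q\psi(p\otimes x)$ on $Q$ and $\theta_{p,q}(y)=\psi(y\otimes q)p$ on $P$; $\mathcal{F}_P(Q)$ (resp. $\mathcal{F}_Q(P)$) is the additive group generated by all $\theta_{q,p}$ (resp. $\theta_{p,q}$).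 Condition (FS'): there exist $\Theta\in\mathcal{F}_P(Q)$, $\Phi\in\mathcal{F}_Q(P)$ fixing every element of $Q$, resp. $P$. Let $\Delta:R\to\mathrm{End}(Q_R)$, $\Delta(r)(q)=rq$. For a covariant representation there is a unique ring homomorphism $\pi_{T,S}:\mathcal{F}_P(Q)\to B$ with $\pi_{T,S}(\theta_{q,p})=T(q)S(p)$. The Toeplitz representation $(\iota_P,\iota_Q,\iota_R,\mathcal{T}_{(P,Q,\psi)})$ is the universal covariant representation (every covariant representation factors uniquely through it); it is $\mathbb{Z}$-graded with $\mathcal{T}_i$ the additive group generated by elements $\iota_Q^m(q)\iota_P^n(p)$ and $\iota_R(r)\iota_Q^m(q)\iota_P^n(p)$, $q\in Q^{\otimes m},p\in P^{\otimes n}$, $m-n=i$, where $\iota_Q^m(q_1\otimes\cdots\otimes q_m)=\iota_Q(q_1)\cdots\iota_Q(q_m)$, similarly $\iota_P^n$, and $\iota^0=\iota_R$. An ideal $J$ of $R$ is $\psi$-compatible if $\Delta(J)\subseteq\mathcal{F}_P(Q)$. For such $J$, $\mathcal{T}(J)$ is the ideal of $\mathcal{T}_{(P,Q,\psi)}$ generated by $\{\iota_R(x)-\pi_{\iota_Q,\iota_P}(\Delta(x)):x\in J\}$ and the relative Cuntz–Pimsner ring is $\mathcal{O}_{(P,Q,\psi)}(J)=\mathcal{T}_{(P,Q,\psi)}/\mathcal{T}(J)$ with the quotient grading $\mathcal{O}_i=\rho(\mathcal{T}_i)$, $\rho$ the quotient map. *)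

theory Defs
  imports "HOL-Algebra.Algebra"
begin

text \<open>An R-bimodule: an abelian group (the additive part of a ring record; its
multiplicative fields are ignored) with a left and a right R-action.\<close>

record ('r, 'a) bimod = "'a ring" +
  lact :: "'r \<Rightarrow> 'a \<Rightarrow> 'a"
  ract :: "'a \<Rightarrow> 'r \<Rightarrow> 'a"

definition bimodule :: "('r, 'm) ring_scheme \<Rightarrow> ('r, 'a, 'n) bimod_scheme \<Rightarrow> bool" where
  "bimodule R M \<longleftrightarrow> abelian_group M \<and>
     (\<forall>r\<in>carrier R. \<forall>m\<in>carrier M. lact M r m \<in> carrier M \<and> ract M m r \<in> carrier M) \<and>
     (\<forall>r\<in>carrier R. \<forall>s\<in>carrier R. \<forall>m\<in>carrier M.
         lact M (r \<oplus>\<^bsub>R\<^esub> s) m = lact M r m \<oplus>\<^bsub>M\<^esub> lact M s m \<and>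
         lact M (r \<otimes>\<^bsub>R\<^esub> s) m = lact M r (lact M s m) \<and>
         ract M m (r \<oplus>\<^bsub>R\<^esub> s) = ract M m r \<oplus>\<^bsub>M\<^esub> ract M m s \<and>
         ract M m (r \<otimes>\<^bsub>R\<^esub> s) = ract M (ract M m r) s \<and>
         ract M (lact M r m) s = lact M r (ract M m s)) \<and>
     (\<forall>r\<in>carrier R. \<forall>m\<in>carrier M. \<forall>n\<in>carrier M.
         lact M r (m \<oplus>\<^bsub>M\<^esub> n) = lact M r m \<oplus>\<^bsub>M\<^esub> lact M r n \<and>
         ract M (m \<oplus>\<^bsub>M\<^esub> n) r = ract M m r \<oplus>\<^bsub>M\<^esub> ract M n r)"

text \<open>A bimodule homomorphism \<open>P \<otimes>_R Q \<rightarrow> R\<close> is represented (via the universal property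
of the balanced tensor product) by an R-balanced biadditive map
\<open>\<psi> p q = \<psi>(p \<otimes> q)\<close> which is compatible with the outer actions.\<close>

definition psi_hom ::
  "('r, 'm) ring_scheme \<Rightarrow> ('r, 'p, 'n1) bimod_scheme \<Rightarrow> ('r, 'q, 'n2) bimod_scheme
     \<Rightarrow> ('p \<Rightarrow> 'q \<Rightarrow> 'r) \<Rightarrow> bool" where
  "psi_hom R P Q \<psi> \<longleftrightarrow>
     (\<forall>p\<in>carrier P. \<forall>q\<in>carrier Q. \<psi> p q \<in> carrier R) \<and>
     (\<forall>p\<in>carrier P. \<forall>p'\<in>carrier P. \<forall>q\<in>carrier Q.
         \<psi> (p \<oplus>\<^bsub>P\<^esub> p') q = \<psi> p q \<oplus>\<^bsub>R\<^esub> \<psi> p' q) \<and>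
     (\<forall>p\<in>carrier P. \<forall>q\<in>carrier Q. \<forall>q'\<in>carrier Q.
         \<psi> p (q \<oplus>\<^bsub>Q\<^esub> q') = \<psi> p q \<oplus>\<^bsub>R\<^esub> \<psi> p q') \<and>
     (\<forall>r\<in>carrier R. \<forall>p\<in>carrier P. \<forall>q\<in>carrier Q.
         \<psi> (ract P p r) q = \<psi> p (lact Q r q) \<and>
         \<psi> (lact P r p) q = r \<otimes>\<^bsub>R\<^esub> \<psi> p q \<and>
         \<psi> p (ract Q q r) = \<psi> p q \<otimes>\<^bsub>R\<^esub> r)"

definition R_system ::
  "('r, 'm) ring_scheme \<Rightarrow> ('r, 'p, 'n1) bimod_scheme \<Rightarrow> ('r, 'q, 'n2) bimod_scheme
     \<Rightarrow> ('p \<Rightarrow> 'q \<Rightarrow> 'r) \<Rightarrow> bool" where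
  "R_system R P Q \<psi> \<longleftrightarrow> ring R \<and> bimodule R P \<and> bimodule R Q \<and> psi_hom R P Q \<psi>"

definition unital_R_system ::
  "('r, 'm) ring_scheme \<Rightarrow> ('r, 'p, 'n1) bimod_scheme \<Rightarrow> ('r, 'q, 'n2) bimod_scheme
     \<Rightarrow> ('p \<Rightarrow> 'q \<Rightarrow> 'r) \<Rightarrow> bool" where
  "unital_R_system R P Q \<psi> \<longleftrightarrow> R_system R P Q \<psi> \<and>
     (\<forall>p\<in>carrier P. lact P \<one>\<^bsub>R\<^esub> p = p \<and> ract P p \<one>\<^bsub>R\<^esub> = p) \<and>
     (\<forall>q\<in>carrier Q. lact Q \<one>\<^bsub>R\<^esub> q = q \<and> ract Q q \<one>\<^bsub>R\<^esub> = q)"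

inductive_set add_span :: "('a, 'm) ring_scheme \<Rightarrow> 'a set \<Rightarrow> 'a set"
  for G :: "('a, 'm) ring_scheme" and S :: "'a set" where
  zero: "\<zero>\<^bsub>G\<^esub> \<in> add_span G S"
| gen: "s \<in> S \<Longrightarrow> s \<in> add_span G S"
| add: "a \<in> add_span G S \<Longrightarrow> b \<in> add_span G S \<Longrightarrow> a \<oplus>\<^bsub>G\<^esub> b \<in> add_span G S"
| neg: "a \<in> add_span G S \<Longrightarrow> \<ominus>\<^bsub>G\<^esub> a \<in> add_span G S"

definition theta_QP :: "('r, 'q, 'n2) bimod_scheme \<Rightarrow> ('p \<Rightarrow> 'q \<Rightarrow> 'r) \<Rightarrow> 'q \<Rightarrow> 'p \<Rightarrow> 'q \<Rightarrow> 'q" where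
  "theta_QP Q \<psi> q p = restrict (\<lambda>x. ract Q q (\<psi> p x)) (carrier Q)"

definition theta_PQ :: "('r, 'p, 'n1) bimod_scheme \<Rightarrow> ('p \<Rightarrow> 'q \<Rightarrow> 'r) \<Rightarrow> 'p \<Rightarrow> 'q \<Rightarrow> 'p \<Rightarrow> 'p" where
  "theta_PQ P \<psi> p q = restrict (\<lambda>y. lact P (\<psi> y q) p) (carrier P)"

inductive_set FPQ :: "('r, 'p, 'n1) bimod_scheme \<Rightarrow> ('r, 'q, 'n2) bimod_scheme
     \<Rightarrow> ('p \<Rightarrow> 'q \<Rightarrow> 'r) \<Rightarrow> ('q \<Rightarrow> 'q) set"
  for P Q \<psi> where
  zero: "restrict (\<lambda>x. \<zero>\<^bsub>Q\<^esub>) (carrier Q) \<in> FPQ P Q \<psi>"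
| theta: "q \<in> carrier Q \<Longrightarrow> p \<in> carrier P \<Longrightarrow> theta_QP Q \<psi> q p \<in> FPQ P Q \<psi>"
| add: "f \<in> FPQ P Q \<psi> \<Longrightarrow> g \<in> FPQ P Q \<psi> \<Longrightarrow>
          restrict (\<lambda>x. f x \<oplus>\<^bsub>Q\<^esub> g x) (carrier Q) \<in> FPQ P Q \<psi>"
| neg: "f \<in> FPQ P Q \<psi> \<Longrightarrow> restrict (\<lambda>x. \<ominus>\<^bsub>Q\<^esub> f x) (carrier Q) \<in> FPQ P Q \<psi>"

inductive_set FQP :: "('r, 'p, 'n1) bimod_scheme \<Rightarrow> ('r, 'q, 'n2) bimod_scheme
     \<Rightarrow> ('p \<Rightarrow> 'q \<Rightarrow> 'r) \<Rightarrow> ('p \<Rightarrow> 'p) set"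
  for P Q \<psi> where
  zero: "restrict (\<lambda>y. \<zero>\<^bsub>P\<^esub>) (carrier P) \<in> FQP P Q \<psi>"
| theta: "p \<in> carrier P \<Longrightarrow> q \<in> carrier Q \<Longrightarrow> theta_PQ P \<psi> p q \<in> FQP P Q \<psi>"
| add: "f \<in> FQP P Q \<psi> \<Longrightarrow> g \<in> FQP P Q \<psi> \<Longrightarrow>
          restrict (\<lambda>y. f y \<oplus>\<^bsub>P\<^esub> g y) (carrier P) \<in> FQP P Q \<psi>"
| neg: "f \<in> FQP P Q \<psi> \<Longrightarrow> restrict (\<lambda>y. \<ominus>\<^bsub>P\<^esub> f y) (carrier P) \<in> FQP P Q \<psi>"

definition cond_FS' :: "('r, 'p, 'n1) bimod_scheme \<Rightarrow> ('r, 'q, 'n2) bimod_scheme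
     \<Rightarrow> ('p \<Rightarrow> 'q \<Rightarrow> 'r) \<Rightarrow> bool" where
  "cond_FS' P Q \<psi> \<longleftrightarrow>
     (\<exists>\<Theta>\<in>FPQ P Q \<psi>. \<forall>x\<in>carrier Q. \<Theta> x = x) \<and>
     (\<exists>\<Phi>\<in>FQP P Q \<psi>. \<forall>y\<in>carrier P. \<Phi> y = y)"

definition Delta :: "('r, 'q, 'n2) bimod_scheme \<Rightarrow> 'r \<Rightarrow> 'q \<Rightarrow> 'q" where
  "Delta Q r = restrict (\<lambda>q. lact Q r q) (carrier Q)"

definition psi_compatible ::
  "('r, 'm) ring_scheme \<Rightarrow> ('r, 'p, 'n1) bimod_scheme \<Rightarrow> ('r, 'q, 'n2) bimod_scheme
     \<Rightarrow> ('p \<Rightarrow> 'q \<Rightarrow> 'r) \<Rightarrow> 'r set \<Rightarrow> bool" where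
  "psi_compatible R P Q \<psi> J \<longleftrightarrow> ideal J R \<and> (\<forall>x\<in>J. Delta Q x \<in> FPQ P Q \<psi>)"

text \<open>Surjectivity of \<open>\<psi> : P \<otimes>_R Q \<rightarrow> R\<close>: the image of the tensor product is the additive
subgroup generated by the values on elementary tensors.\<close>
definition psi_surjective ::
  "('r, 'm) ring_scheme \<Rightarrow> ('r, 'p, 'n1) bimod_scheme \<Rightarrow> ('r, 'q, 'n2) bimod_scheme
     \<Rightarrow> ('p \<Rightarrow> 'q \<Rightarrow> 'r) \<Rightarrow> bool" where
  "psi_surjective R P Q \<psi> \<longleftrightarrow>
     carrier R \<subseteq> add_span R {\<psi> p q | p q. p \<in> carrier P \<and> q \<in> carrier Q}"

text \<open>Ring homomorphisms in the sense of the paper (not required to preserve units).\<close>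
definition rng_hom :: "('a, 'm) ring_scheme \<Rightarrow> ('b, 'n) ring_scheme \<Rightarrow> ('a \<Rightarrow> 'b) set" where
  "rng_hom A B = {h. h \<in> carrier A \<rightarrow> carrier B \<and>
      (\<forall>x\<in>carrier A. \<forall>y\<in>carrier A. h (x \<oplus>\<^bsub>A\<^esub> y) = h x \<oplus>\<^bsub>B\<^esub> h y \<and>
                                     h (x \<otimes>\<^bsub>A\<^esub> y) = h x \<otimes>\<^bsub>B\<^esub> h y)}"

definition cov_rep ::
  "('r, 'm) ring_scheme \<Rightarrow> ('r, 'p, 'n1) bimod_scheme \<Rightarrow> ('r, 'q, 'n2) bimod_scheme
     \<Rightarrow> ('p \<Rightarrow> 'q \<Rightarrow> 'r) \<Rightarrow> ('p \<Rightarrow> 'b) \<Rightarrow> ('q \<Rightarrow> 'b) \<Rightarrow> ('r \<Rightarrow> 'b)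
     \<Rightarrow> ('b, 'k) ring_scheme \<Rightarrow> bool" where
  "cov_rep R P Q \<psi> S T \<sigma> B \<longleftrightarrow> ring B \<and> \<sigma> \<in> rng_hom R B \<and>
     S \<in> carrier P \<rightarrow> carrier B \<and> T \<in> carrier Q \<rightarrow> carrier B \<and>
     (\<forall>p\<in>carrier P. \<forall>p'\<in>carrier P. S (p \<oplus>\<^bsub>P\<^esub> p') = S p \<oplus>\<^bsub>B\<^esub> S p') \<and>
     (\<forall>q\<in>carrier Q. \<forall>q'\<in>carrier Q. T (q \<oplus>\<^bsub>Q\<^esub> q') = T q \<oplus>\<^bsub>B\<^esub> T q') \<and>
     (\<forall>r\<in>carrier R. \<forall>p\<in>carrier P.
        S (ract P p r) = S p \<otimes>\<^bsub>B\<^esub> \<sigma> r \<and> S (lact P r p) = \<sigma> r \<otimes>\<^bsub>B\<^esub> S p) \<and>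
     (\<forall>r\<in>carrier R. \<forall>q\<in>carrier Q.
        T (ract Q q r) = T q \<otimes>\<^bsub>B\<^esub> \<sigma> r \<and> T (lact Q r q) = \<sigma> r \<otimes>\<^bsub>B\<^esub> T q) \<and>
     (\<forall>p\<in>carrier P. \<forall>q\<in>carrier Q. \<sigma> (\<psi> p q) = S p \<otimes>\<^bsub>B\<^esub> T q)"

text \<open>Universality of a covariant representation \<open>(\<iota>_P,\<iota>_Q,\<iota>_R,\<T>)\<close>: every covariant
representation (into a ring whose elements live in the same HOL type as those of \<open>\<T>\<close>)
factors uniquely through it.\<close>
definition toeplitz_rep ::
  "('r, 'm) ring_scheme \<Rightarrow> ('r, 'p, 'n1) bimod_scheme \<Rightarrow> ('r, 'q, 'n2) bimod_scheme
     \<Rightarrow> ('p \<Rightarrow> 'q \<Rightarrow> 'r) \<Rightarrow> ('p \<Rightarrow> 't) \<Rightarrow> ('q \<Rightarrow> 't) \<Rightarrow> ('r \<Rightarrow> 't)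
     \<Rightarrow> 't ring \<Rightarrow> bool" where
  "toeplitz_rep R P Q \<psi> iP iQ iR TT \<longleftrightarrow> cov_rep R P Q \<psi> iP iQ iR TT \<and>
     (\<forall>(B :: 't ring) S T \<sigma>. cov_rep R P Q \<psi> S T \<sigma> B \<longrightarrow>
        (\<exists>\<phi>\<in>rng_hom TT B.
           (\<forall>p\<in>carrier P. \<phi> (iP p) = S p) \<and> (\<forall>q\<in>carrier Q. \<phi> (iQ q) = T q) \<and>
           (\<forall>r\<in>carrier R. \<phi> (iR r) = \<sigma> r) \<and>
           (\<forall>\<phi>'\<in>rng_hom TT B.
              (\<forall>p\<in>carrier P. \<phi>' (iP p) = S p) \<and> (\<forall>q\<in>carrier Q. \<phi>' (iQ q) = T q) \<and>
              (\<forall>r\<in>carrier R. \<phi>' (iR r) = \<sigma> r) \<longrightarrow> (\<forall>x\<in>carrier TT. \<phi>' x = \<phi> x))))"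

text \<open>Graph of \<open>\<pi>_{T,S} : \<F>_P(Q) \<rightarrow> B\<close>, determined by \<open>\<pi>(\<theta>_{q,p}) = T(q)S(p)\<close> and additivity
(the paper asserts that this is a well-defined ring homomorphism).\<close>
inductive_set pi_graph :: "('r, 'p, 'n1) bimod_scheme \<Rightarrow> ('r, 'q, 'n2) bimod_scheme
     \<Rightarrow> ('p \<Rightarrow> 'q \<Rightarrow> 'r) \<Rightarrow> ('q \<Rightarrow> 'b) \<Rightarrow> ('p \<Rightarrow> 'b) \<Rightarrow> ('b, 'k) ring_scheme
     \<Rightarrow> (('q \<Rightarrow> 'q) \<times> 'b) set"
  for P Q \<psi> T S B where
  zero: "(restrict (\<lambda>x. \<zero>\<^bsub>Q\<^esub>) (carrier Q), \<zero>\<^bsub>B\<^esub>) \<in> pi_graph P Q \<psi> T S B"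
| theta: "q \<in> carrier Q \<Longrightarrow> p \<in> carrier P \<Longrightarrow>
           (theta_QP Q \<psi> q p, T q \<otimes>\<^bsub>B\<^esub> S p) \<in> pi_graph P Q \<psi> T S B"
| add: "(f, b) \<in> pi_graph P Q \<psi> T S B \<Longrightarrow> (g, c) \<in> pi_graph P Q \<psi> T S B \<Longrightarrow>
          (restrict (\<lambda>x. f x \<oplus>\<^bsub>Q\<^esub> g x) (carrier Q), b \<oplus>\<^bsub>B\<^esub> c) \<in> pi_graph P Q \<psi> T S B"
| neg: "(f, b) \<in> pi_graph P Q \<psi> T S B \<Longrightarrow>
          (restrict (\<lambda>x. \<ominus>\<^bsub>Q\<^esub> f x) (carrier Q), \<ominus>\<^bsub>B\<^esub> b) \<in> pi_graph P Q \<psi> T S B"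

definition list_prod :: "('a, 'm) ring_scheme \<Rightarrow> 'a list \<Rightarrow> 'a" where
  "list_prod B xs = foldr (\<lambda>x a. x \<otimes>\<^bsub>B\<^esub> a) xs \<one>\<^bsub>B\<^esub>"

text \<open>\<open>\<iota>^n(x_1 \<otimes> \<dots> \<otimes> x_n) = \<iota>(x_1)\<cdots>\<iota>(x_n)\<close>, and \<open>\<iota>^0 = \<iota>_R\<close> on \<open>X^{\<otimes>0} = R\<close>
(the element \<open>r\<close> is only used when the list is empty).\<close>
definition iota_pow :: "('t, 'm) ring_scheme \<Rightarrow> ('r \<Rightarrow> 't) \<Rightarrow> ('x \<Rightarrow> 't) \<Rightarrow> 'x list \<Rightarrow> 'r \<Rightarrow> 't" where
  "iota_pow TT iR iX xs r = (if xs = [] then iR r else list_prod TT (map iX xs))"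

text \<open>Generators of \<open>\<T>_i\<close> (elementary tensors suffice, since general tensors are sums of them).\<close>
definition toeplitz_gens ::
  "('r, 'm) ring_scheme \<Rightarrow> ('r, 'p, 'n1) bimod_scheme \<Rightarrow> ('r, 'q, 'n2) bimod_scheme
     \<Rightarrow> ('p \<Rightarrow> 't) \<Rightarrow> ('q \<Rightarrow> 't) \<Rightarrow> ('r \<Rightarrow> 't) \<Rightarrow> 't ring \<Rightarrow> int \<Rightarrow> 't set" where
  "toeplitz_gens R P Q iP iQ iR TT i =
     {iota_pow TT iR iQ qs r1 \<otimes>\<^bsub>TT\<^esub> iota_pow TT iR iP ps r2 | qs ps r1 r2.
        set qs \<subseteq> carrier Q \<and> set ps \<subseteq> carrier P \<and> r1 \<in> carrier R \<and> r2 \<in> carrier R \<and>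
        int (length qs) - int (length ps) = i}
   \<union> {iR r \<otimes>\<^bsub>TT\<^esub> (iota_pow TT iR iQ qs r1 \<otimes>\<^bsub>TT\<^esub> iota_pow TT iR iP ps r2) | r qs ps r1 r2.
        r \<in> carrier R \<and> set qs \<subseteq> carrier Q \<and> set ps \<subseteq> carrier P \<and> r1 \<in> carrier R \<and>
        r2 \<in> carrier R \<and> int (length qs) - int (length ps) = i}"

definition toeplitz_grading ::
  "('r, 'm) ring_scheme \<Rightarrow> ('r, 'p, 'n1) bimod_scheme \<Rightarrow> ('r, 'q, 'n2) bimod_scheme
     \<Rightarrow> ('p \<Rightarrow> 't) \<Rightarrow> ('q \<Rightarrow> 't) \<Rightarrow> ('r \<Rightarrow> 't) \<Rightarrow> 't ring \<Rightarrow> int \<Rightarrow> 't set" where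
  "toeplitz_grading R P Q iP iQ iR TT i = add_span TT (toeplitz_gens R P Q iP iQ iR TT i)"

definition TJ_ideal ::
  "('r, 'm) ring_scheme \<Rightarrow> ('r, 'p, 'n1) bimod_scheme \<Rightarrow> ('r, 'q, 'n2) bimod_scheme
     \<Rightarrow> ('p \<Rightarrow> 'q \<Rightarrow> 'r) \<Rightarrow> ('p \<Rightarrow> 't) \<Rightarrow> ('q \<Rightarrow> 't) \<Rightarrow> ('r \<Rightarrow> 't) \<Rightarrow> 't ring
     \<Rightarrow> 'r set \<Rightarrow> 't set" where
  "TJ_ideal R P Q \<psi> iP iQ iR TT J =
     genideal TT {iR x \<ominus>\<^bsub>TT\<^esub> b | x b. x \<in> J \<and> (Delta Q x, b) \<in> pi_graph P Q \<psi> iQ iP TT}"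

definition rel_CP_ring ::
  "('r, 'm) ring_scheme \<Rightarrow> ('r, 'p, 'n1) bimod_scheme \<Rightarrow> ('r, 'q, 'n2) bimod_scheme
     \<Rightarrow> ('p \<Rightarrow> 'q \<Rightarrow> 'r) \<Rightarrow> ('p \<Rightarrow> 't) \<Rightarrow> ('q \<Rightarrow> 't) \<Rightarrow> ('r \<Rightarrow> 't) \<Rightarrow> 't ring
     \<Rightarrow> 'r set \<Rightarrow> 't set ring" where
  "rel_CP_ring R P Q \<psi> iP iQ iR TT J = TT Quot (TJ_ideal R P Q \<psi> iP iQ iR TT J)"

definition rel_CP_grading ::
  "('r, 'm) ring_scheme \<Rightarrow> ('r, 'p, 'n1) bimod_scheme \<Rightarrow> ('r, 'q, 'n2) bimod_scheme
     \<Rightarrow> ('p \<Rightarrow> 'q \<Rightarrow> 'r) \<Rightarrow> ('p \<Rightarrow> 't) \<Rightarrow> ('q \<Rightarrow> 't) \<Rightarrow> ('r \<Rightarrow> 't) \<Rightarrow> 't ring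
     \<Rightarrow> 'r set \<Rightarrow> int \<Rightarrow> 't set set" where
  "rel_CP_grading R P Q \<psi> iP iQ iR TT J i =
     (\<lambda>x. TJ_ideal R P Q \<psi> iP iQ iR TT J +>\<^bsub>TT\<^esub> x) ` toeplitz_grading R P Q iP iQ iR TT i"

definition strongly_graded :: "('a, 'm) ring_scheme \<Rightarrow> (int \<Rightarrow> 'a set) \<Rightarrow> bool" where
  "strongly_graded B Bs \<longleftrightarrow>
     (\<forall>m n. add_span B {x \<otimes>\<^bsub>B\<^esub> y | x y. x \<in> Bs m \<and> y \<in> Bs n} = Bs (m + n))"

end

theory Submission
  imports Defs
begin

text \<open>
  Let \<open>e\<close> be the class of \<open>\<iota>\<^sub>R(1)\<close> in \<open>\<O> = \<T>/\<T>(J)\<close>; it acts as a two-sided unit on every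
  homogeneous component. Because \<open>1 \<in> J\<close>, the defining relation of \<open>\<T>(J)\<close> identifies \<open>\<iota>\<^sub>R(1)\<close>
  with \<open>\<pi>(\<Delta>(1))\<close>, a sum of products \<open>\<iota>\<^sub>Q(q)\<iota>\<^sub>P(p) \<in> \<T>\<^sub>1\<T>\<^sub>-\<^sub>1\<close>; because \<open>\<psi>\<close> is surjective,
  \<open>1 = \<Sigma> \<psi>(p \<otimes> q)\<close> and so \<open>\<iota>\<^sub>R(1) = \<Sigma> \<iota>\<^sub>P(p)\<iota>\<^sub>Q(q) \<in> \<T>\<^sub>-\<^sub>1\<T>\<^sub>1\<close>. Thus \<open>e \<in> \<O>\<^sub>1\<O>\<^sub>-\<^sub>1 \<inter> \<O>\<^sub>-\<^sub>1\<O>\<^sub>1\<close>,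
  and inserting \<open>e\<close> between factors gives \<open>e \<in> \<O>\<^sub>k\<O>\<^sub>-\<^sub>k\<close> for all \<open>k\<close> by induction. Hence every
  \<open>x \<in> \<O>\<^sub>m\<^sub>+\<^sub>n\<close> satisfies \<open>x = e x \<in> \<O>\<^sub>m\<O>\<^sub>-\<^sub>m\<O>\<^sub>m\<^sub>+\<^sub>n \<subseteq> \<O>\<^sub>m\<O>\<^sub>n\<close>.
\<close>

lemma add_span_subset:
  assumes "additive_subgroup H G" and "S \<subseteq> H"
  shows "add_span G S \<subseteq> H"
proof
  fix x assume "x \<in> add_span G S"
  then show "x \<in> H"
    by induction (use assms additive_subgroup.zero_closed additive_subgroup.a_closed
                      additive_subgroup.a_inv_closed in auto)
qed

lemma add_span_mono:
  assumes "S \<subseteq> T"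
  shows "add_span G S \<subseteq> add_span G T"
proof
  fix x assume "x \<in> add_span G S"
  then show "x \<in> add_span G T"
    by induction (use assms in \<open>auto intro: add_span.intros\<close>)
qed

lemma (in abelian_group) additive_subgroup_add_span:
  assumes "S \<subseteq> carrier G"
  shows "additive_subgroup (add_span G S) G"
proof -
  have "add_span G S \<subseteq> carrier G"
  proof
    fix x assume "x \<in> add_span G S"
    then show "x \<in> carrier G" by induction (use assms in auto)
  qed
  then show ?thesis
    by (auto intro!: additive_subgroupI add.subgroupI intro: add_span.intros simp: a_inv_def[symmetric])
qed

lemma add_span_image:
  assumes "abelian_group_hom A B h" and "S \<subseteq> carrier A"
  shows "h ` add_span A S \<subseteq> add_span B (h ` S)"
proof -
  interpret abelian_group_hom A B h by (fact assms(1))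
  interpret span: additive_subgroup "add_span A S" A
    using assms(2) by (rule G.additive_subgroup_add_span)
  have "h x \<in> add_span B (h ` S)" if "x \<in> add_span A S" for x
    using that
  proof induction
    case (add a b)
    then show ?case using span.a_Hcarr by (auto intro: add_span.add)
  next
    case (neg a)
    then show ?case using span.a_Hcarr by (auto intro: add_span.neg)
  qed (auto intro: add_span.intros)
  then show ?thesis by auto
qed

lemma (in ring) add_span_mult_left_closed:
  assumes "additive_subgroup H R" and "S \<subseteq> carrier R" and "x \<in> carrier R"
    and "\<And>s. s \<in> S \<Longrightarrow> x \<otimes> s \<in> H" and "h \<in> add_span R S"
  shows "x \<otimes> h \<in> H"
proof -
  interpret H: additive_subgroup H R by fact
  interpret span: additive_subgroup "add_span R S" R
    using assms(2) by (rule additive_subgroup_add_span)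
  from assms(5) show ?thesis
  proof induction
    case (add a b)
    then show ?case using assms(3) span.a_Hcarr by (simp add: r_distr)
  next
    case (neg a)
    then show ?case using assms(3) span.a_Hcarr by (simp add: r_minus)
  qed (use assms in auto)
qed

lemma (in ring) add_span_mult_right_closed:
  assumes "additive_subgroup H R" and "S \<subseteq> carrier R" and "x \<in> carrier R"
    and "\<And>s. s \<in> S \<Longrightarrow> s \<otimes> x \<in> H" and "h \<in> add_span R S"
  shows "h \<otimes> x \<in> H"
proof -
  interpret H: additive_subgroup H R by fact
  interpret span: additive_subgroup "add_span R S" R
    using assms(2) by (rule additive_subgroup_add_span)
  from assms(5) show ?thesis
  proof induction
    case (add a b)
    then show ?case using assms(3) span.a_Hcarr by (simp add: l_distr)
  next
    case (neg a)
    then show ?case using assms(3) span.a_Hcarr by (simp add: l_minus)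
  qed (use assms in auto)
qed

lemma (in ring) additive_subgroup_left_fixed:
  assumes "x \<in> carrier R"
  shows "additive_subgroup {h \<in> carrier R. x \<otimes> h = h} R"
  using assms
  by (auto intro!: additive_subgroupI add.subgroupI simp: r_distr r_minus a_inv_def[symmetric])

lemma (in ring) additive_subgroup_right_fixed:
  assumes "x \<in> carrier R"
  shows "additive_subgroup {h \<in> carrier R. h \<otimes> x = h} R"
  using assms
  by (auto intro!: additive_subgroupI add.subgroupI simp: l_distr l_minus a_inv_def[symmetric])

lemma rng_hom_imp_abelian_group_hom:
  assumes "ring A" and "ring B" and "h \<in> rng_hom A B"
  shows "abelian_group_hom A B h"
  using assms
  by (auto intro!: abelian_group_homI group_hom.intro group_hom_axioms.intro
           simp: ring.is_abelian_group abelian_group.a_group hom_def rng_hom_def)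

section \<open>\<open>\<int>\<close>-graded rings\<close>

definition graded_product :: "('a, 'm) ring_scheme \<Rightarrow> (int \<Rightarrow> 'a set) \<Rightarrow> int \<Rightarrow> int \<Rightarrow> 'a set" where
  "graded_product B G m n = add_span B {x \<otimes>\<^bsub>B\<^esub> y | x y. x \<in> G m \<and> y \<in> G n}"

lemma strongly_graded_iff_graded_product:
  "strongly_graded B G \<longleftrightarrow> (\<forall>m n. graded_product B G m n = G (m + n))"
  unfolding strongly_graded_def graded_product_def ..

lemma graded_product_image:
  assumes "ring_hom_ring A B h" and "\<And>i. G i \<subseteq> carrier A"
  shows "h ` graded_product A G m n \<subseteq> graded_product B (\<lambda>i. h ` G i) m n"
proof -
  interpret ring_hom_ring A B h by fact
  have "h ` {x \<otimes>\<^bsub>A\<^esub> y | x y. x \<in> G m \<and> y \<in> G n}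
          \<subseteq> {x \<otimes>\<^bsub>B\<^esub> y | x y. x \<in> h ` G m \<and> y \<in> h ` G n}"
  proof clarify
    fix x y assume "x \<in> G m" "y \<in> G n"
    then have "h (x \<otimes>\<^bsub>A\<^esub> y) = h x \<otimes>\<^bsub>B\<^esub> h y"
      using assms(2) by (blast intro: hom_mult)
    then show "\<exists>x' y'. h (x \<otimes>\<^bsub>A\<^esub> y) = x' \<otimes>\<^bsub>B\<^esub> y' \<and> x' \<in> h ` G m \<and> y' \<in> h ` G n"
      using \<open>x \<in> G m\<close> \<open>y \<in> G n\<close> by blast
  qed
  then show ?thesis
    unfolding graded_product_def
    using add_span_image[OF is_abelian_group_hom, of "{x \<otimes>\<^bsub>A\<^esub> y | x y. x \<in> G m \<and> y \<in> G n}"]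
          add_span_mono assms(2) by blast
qed

locale graded_ring = ring +
  fixes G :: "int \<Rightarrow> 'a set"
  assumes component_subgroup: "additive_subgroup (G i) R"
    and component_mult: "x \<in> G a \<Longrightarrow> y \<in> G b \<Longrightarrow> x \<otimes> y \<in> G (a + b)"
begin

lemma component_carrier: "x \<in> G i \<Longrightarrow> x \<in> carrier R"
  using additive_subgroup.a_Hcarr[OF component_subgroup] .

lemma additive_subgroup_graded_product: "additive_subgroup (graded_product R G m n) R"
  unfolding graded_product_def
  by (rule additive_subgroup_add_span) (auto intro: component_carrier)

lemma graded_product_subset: "graded_product R G m n \<subseteq> G (m + n)"
  unfolding graded_product_def
  by (rule add_span_subset[OF component_subgroup]) (auto intro: component_mult)

lemma graded_product_mult_right:
  assumes "z \<in> graded_product R G a b" and "w \<in> G c"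
  shows "z \<otimes> w \<in> graded_product R G a (b + c)"
proof (rule add_span_mult_right_closed[OF additive_subgroup_graded_product])
  show "s \<otimes> w \<in> graded_product R G a (b + c)"
    if s: "s \<in> {x \<otimes> y | x y. x \<in> G a \<and> y \<in> G b}" for s
  proof -
    obtain x y where "s = x \<otimes> y" "x \<in> G a" "y \<in> G b" using s by blast
    then have "s \<otimes> w = x \<otimes> (y \<otimes> w)" and "y \<otimes> w \<in> G (b + c)"
      using assms(2) by (auto simp: m_assoc component_carrier component_mult)
    then show ?thesis
      using \<open>x \<in> G a\<close> unfolding graded_product_def by (auto intro: add_span.gen)
  qed
qed (use assms in \<open>auto simp: graded_product_def intro: component_carrier\<close>)

lemma graded_product_mult_left:
  assumes "z \<in> graded_product R G a b" and "w \<in> G c"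
  shows "w \<otimes> z \<in> graded_product R G (c + a) b"
proof (rule add_span_mult_left_closed[OF additive_subgroup_graded_product])
  show "w \<otimes> s \<in> graded_product R G (c + a) b"
    if s: "s \<in> {x \<otimes> y | x y. x \<in> G a \<and> y \<in> G b}" for s
  proof -
    obtain x y where "s = x \<otimes> y" "x \<in> G a" "y \<in> G b" using s by blast
    then have "w \<otimes> s = (w \<otimes> x) \<otimes> y" and "w \<otimes> x \<in> G (c + a)"
      using assms(2) by (auto simp: m_assoc component_carrier component_mult)
    then show ?thesis
      using \<open>y \<in> G b\<close> unfolding graded_product_def by (auto intro: add_span.gen)
  qed
qed (use assms in \<open>auto simp: graded_product_def intro: component_carrier\<close>)

lemma graded_product_shift:
  assumes e: "e \<in> graded_product R G c d" and unit: "\<And>i x. x \<in> G i \<Longrightarrow> x \<otimes> e = x"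
    and z: "z \<in> graded_product R G a b"
  shows "z \<in> graded_product R G (a + c) (d + b)"
proof -
  have "graded_product R G a b \<subseteq> graded_product R G (a + c) (d + b)"
    unfolding graded_product_def[of R G a b]
  proof (rule add_span_subset[OF additive_subgroup_graded_product], clarify)
    fix x y assume "x \<in> G a" "y \<in> G b"
    then have "(x \<otimes> e) \<otimes> y \<in> graded_product R G (a + c) (d + b)"
      by (intro graded_product_mult_right graded_product_mult_left e)
    then show "x \<otimes> y \<in> graded_product R G (a + c) (d + b)"
      using unit \<open>x \<in> G a\<close> by simp
  qed
  then show ?thesis using z by blast
qed

theorem strongly_graded_if_local_unit:
  assumes e0: "e \<in> G 0"
    and unit_left: "\<And>i x. x \<in> G i \<Longrightarrow> e \<otimes> x = x"
    and unit_right: "\<And>i x. x \<in> G i \<Longrightarrow> x \<otimes> e = x"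
    and e_plus: "e \<in> graded_product R G 1 (-1)"
    and e_minus: "e \<in> graded_product R G (-1) 1"
  shows "strongly_graded R G"
proof -
  have e_all: "e \<in> graded_product R G k (-k)" for k
  proof (induction k rule: int_induct[where k = 0])
    case base
    have "e \<otimes> e \<in> graded_product R G 0 0"
      using e0 unfolding graded_product_def by (auto intro: add_span.gen)
    then show ?case using unit_left[OF e0] by simp
  next
    case (step1 i)
    from graded_product_shift[OF e_plus unit_right step1(2)] show ?case
      by (simp add: algebra_simps)
  next
    case (step2 i)
    from graded_product_shift[OF e_minus unit_right step2(2)] show ?case
      by (simp add: algebra_simps)
  qed
  have "G (m + n) \<subseteq> graded_product R G m n" for m n
  proof
    fix g assume "g \<in> G (m + n)"
    then have "e \<otimes> g \<in> graded_product R G m (- m + (m + n))"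
      by (rule graded_product_mult_right[OF e_all])
    then show "g \<in> graded_product R G m n"
      using unit_left[OF \<open>g \<in> G (m + n)\<close>] by simp
  qed
  then show ?thesis
    unfolding strongly_graded_iff_graded_product using graded_product_subset by blast
qed

end

lemma graded_ring_image:
  assumes "graded_ring A G" and "ring_hom_ring A B h"
  shows "graded_ring B (\<lambda>i. h ` G i)"
proof -
  interpret A: graded_ring A G by fact
  interpret ring_hom_ring A B h by fact
  show ?thesis
  proof (intro graded_ring.intro graded_ring_axioms.intro)
    show "ring B" by (rule S.ring_axioms)
    show "additive_subgroup (h ` G i) B" for i
      using img_is_add_subgroup[OF additive_subgroup.a_subgroup[OF A.component_subgroup]]
      by (rule additive_subgroupI)
    show "x \<otimes>\<^bsub>B\<^esub> y \<in> h ` G (a + b)" if xy: "x \<in> h ` G a" "y \<in> h ` G b" for x y a b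
    proof -
      obtain g g' where "x = h g" "g \<in> G a" "y = h g'" "g' \<in> G b" using xy by blast
      then have "x \<otimes>\<^bsub>B\<^esub> y = h (g \<otimes>\<^bsub>A\<^esub> g')"
        by (simp add: hom_mult A.component_carrier)
      then show ?thesis using \<open>g \<in> G a\<close> \<open>g' \<in> G b\<close> by (blast intro: A.component_mult)
    qed
  qed
qed

lemma (in graded_ring) strongly_graded_image_if_local_unit:
  assumes hom: "ring_hom_ring R B h"
    and u0: "u \<in> G 0"
    and unit_left: "\<And>i x. x \<in> G i \<Longrightarrow> u \<otimes> x = x"
    and unit_right: "\<And>i x. x \<in> G i \<Longrightarrow> x \<otimes> u = x"
    and u_plus: "h u \<in> h ` graded_product R G 1 (-1)"
    and u_minus: "h u \<in> h ` graded_product R G (-1) 1"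
  shows "strongly_graded B (\<lambda>i. h ` G i)"
proof -
  interpret ring_hom_ring R B h by fact
  interpret B: graded_ring B "\<lambda>i. h ` G i"
    using graded_ring_image[OF graded_ring_axioms hom] .
  have image_subset: "h ` graded_product R G m n \<subseteq> graded_product B (\<lambda>i. h ` G i) m n"
    for m n using graded_product_image[OF hom] component_carrier by blast
  show ?thesis
  proof (rule B.strongly_graded_if_local_unit)
    show "h u \<in> h ` G 0" using u0 by blast
    show "h u \<otimes>\<^bsub>B\<^esub> x = x" if "x \<in> h ` G i" for i x
      using that unit_left u0 by (auto simp: hom_mult[of u, symmetric] component_carrier)
    show "x \<otimes>\<^bsub>B\<^esub> h u = x" if "x \<in> h ` G i" for i x
      using that unit_right u0 by (auto simp: hom_mult[where y = u, symmetric] component_carrier)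
    show "h u \<in> graded_product B (\<lambda>i. h ` G i) 1 (-1)"
      using u_plus image_subset by blast
    show "h u \<in> graded_product B (\<lambda>i. h ` G i) (-1) 1"
      using u_minus image_subset by blast
  qed
qed

section \<open>The grading of the Toeplitz ring\<close>

lemma list_prod_Nil [simp]: "list_prod B [] = \<one>\<^bsub>B\<^esub>"
  and list_prod_Cons [simp]: "list_prod B (x # xs) = x \<otimes>\<^bsub>B\<^esub> list_prod B xs"
  unfolding list_prod_def by simp_all

lemma (in ring) list_prod_closed [simp]: "set xs \<subseteq> carrier R \<Longrightarrow> list_prod R xs \<in> carrier R"
  by (induction xs) auto

lemma psi_compatible_subset_carrier: "psi_compatible R P Q \<psi> J \<Longrightarrow> J \<subseteq> carrier R"
  unfolding psi_compatible_def using additive_subgroup.a_subset ideal.axioms(1) by blast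

lemma FPQ_imp_pi_graph: "f \<in> FPQ P Q \<psi> \<Longrightarrow> \<exists>b. (f, b) \<in> pi_graph P Q \<psi> T S B"
  by (induction rule: FPQ.induct) (blast intro: pi_graph.intros)+

lemma pi_graph_snd_in_add_span:
  "(f, b) \<in> pi_graph P Q \<psi> T S B \<Longrightarrow>
   b \<in> add_span B {T q \<otimes>\<^bsub>B\<^esub> S p | q p. q \<in> carrier Q \<and> p \<in> carrier P}"
  by (induction rule: pi_graph.induct) (auto intro: add_span.intros)

locale unital_cov_rep =
  fixes R :: "('r, 'm) ring_scheme" and P :: "('r, 'p, 'n1) bimod_scheme"
    and Q :: "('r, 'q, 'n2) bimod_scheme" and psi :: "'p \<Rightarrow> 'q \<Rightarrow> 'r"
    and iP :: "'p \<Rightarrow> 't" and iQ :: "'q \<Rightarrow> 't" and iR :: "'r \<Rightarrow> 't" and TT :: "'t ring"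
  assumes unital_system: "unital_R_system R P Q psi"
    and cov_rep: "cov_rep R P Q psi iP iQ iR TT"
begin

sublocale R: ring R
  using unital_system unfolding unital_R_system_def R_system_def by blast

sublocale T: ring TT
  using cov_rep unfolding cov_rep_def by blast

lemma iR_rng_hom: "iR \<in> rng_hom R TT"
  using cov_rep unfolding cov_rep_def by blast

lemma P_closed [simp]:
  "r \<in> carrier R \<Longrightarrow> p \<in> carrier P \<Longrightarrow> lact P r p \<in> carrier P"
  "r \<in> carrier R \<Longrightarrow> p \<in> carrier P \<Longrightarrow> ract P p r \<in> carrier P"
  and Q_closed [simp]:
  "r \<in> carrier R \<Longrightarrow> q \<in> carrier Q \<Longrightarrow> lact Q r q \<in> carrier Q"
  "r \<in> carrier R \<Longrightarrow> q \<in> carrier Q \<Longrightarrow> ract Q q r \<in> carrier Q"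
  and psi_closed [simp]: "p \<in> carrier P \<Longrightarrow> q \<in> carrier Q \<Longrightarrow> psi p q \<in> carrier R"
  using unital_system
  unfolding unital_R_system_def R_system_def bimodule_def psi_hom_def by auto

lemma iP_closed [simp]: "p \<in> carrier P \<Longrightarrow> iP p \<in> carrier TT"
  and iQ_closed [simp]: "q \<in> carrier Q \<Longrightarrow> iQ q \<in> carrier TT"
  and iR_closed [simp]: "r \<in> carrier R \<Longrightarrow> iR r \<in> carrier TT"
  using cov_rep iR_rng_hom unfolding cov_rep_def rng_hom_def by auto

lemma iR_mult: "r \<in> carrier R \<Longrightarrow> s \<in> carrier R \<Longrightarrow> iR (r \<otimes>\<^bsub>R\<^esub> s) = iR r \<otimes>\<^bsub>TT\<^esub> iR s"
  using iR_rng_hom unfolding rng_hom_def by blast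

lemma iP_ract: "r \<in> carrier R \<Longrightarrow> p \<in> carrier P \<Longrightarrow> iP (ract P p r) = iP p \<otimes>\<^bsub>TT\<^esub> iR r"
  and iP_lact: "r \<in> carrier R \<Longrightarrow> p \<in> carrier P \<Longrightarrow> iP (lact P r p) = iR r \<otimes>\<^bsub>TT\<^esub> iP p"
  and iQ_ract: "r \<in> carrier R \<Longrightarrow> q \<in> carrier Q \<Longrightarrow> iQ (ract Q q r) = iQ q \<otimes>\<^bsub>TT\<^esub> iR r"
  and iQ_lact: "r \<in> carrier R \<Longrightarrow> q \<in> carrier Q \<Longrightarrow> iQ (lact Q r q) = iR r \<otimes>\<^bsub>TT\<^esub> iQ q"
  and iR_psi: "p \<in> carrier P \<Longrightarrow> q \<in> carrier Q \<Longrightarrow> iR (psi p q) = iP p \<otimes>\<^bsub>TT\<^esub> iQ q"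
  using cov_rep unfolding cov_rep_def by auto

lemma iR_one_mult_iP [simp]: "p \<in> carrier P \<Longrightarrow> iR \<one>\<^bsub>R\<^esub> \<otimes>\<^bsub>TT\<^esub> iP p = iP p"
  and iP_mult_iR_one [simp]: "p \<in> carrier P \<Longrightarrow> iP p \<otimes>\<^bsub>TT\<^esub> iR \<one>\<^bsub>R\<^esub> = iP p"
  and iR_one_mult_iQ [simp]: "q \<in> carrier Q \<Longrightarrow> iR \<one>\<^bsub>R\<^esub> \<otimes>\<^bsub>TT\<^esub> iQ q = iQ q"
  and iQ_mult_iR_one [simp]: "q \<in> carrier Q \<Longrightarrow> iQ q \<otimes>\<^bsub>TT\<^esub> iR \<one>\<^bsub>R\<^esub> = iQ q"
  using unital_system iP_lact[of "\<one>\<^bsub>R\<^esub>"] iP_ract[of "\<one>\<^bsub>R\<^esub>"]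
        iQ_lact[of "\<one>\<^bsub>R\<^esub>"] iQ_ract[of "\<one>\<^bsub>R\<^esub>"]
  unfolding unital_R_system_def by auto

abbreviation "iota_pow_P \<equiv> iota_pow TT iR iP"
abbreviation "iota_pow_Q \<equiv> iota_pow TT iR iQ"
abbreviation "monomial qs r1 ps r2 \<equiv> iota_pow_Q qs r1 \<otimes>\<^bsub>TT\<^esub> iota_pow_P ps r2"
abbreviation "gens \<equiv> toeplitz_gens R P Q iP iQ iR TT"
abbreviation "grading \<equiv> toeplitz_grading R P Q iP iQ iR TT"

lemma iota_pow_closed [simp]:
  "set (map iX xs) \<subseteq> carrier TT \<Longrightarrow> r \<in> carrier R \<Longrightarrow> iota_pow TT iR iX xs r \<in> carrier TT"
  unfolding iota_pow_def by simp

lemma image_iP_closed [simp]: "set ps \<subseteq> carrier P \<Longrightarrow> iP ` set ps \<subseteq> carrier TT"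
  and image_iQ_closed [simp]: "set qs \<subseteq> carrier Q \<Longrightarrow> iQ ` set qs \<subseteq> carrier TT"
  by auto

lemma iota_pow_P_closed [simp]:
  "set ps \<subseteq> carrier P \<Longrightarrow> r \<in> carrier R \<Longrightarrow> iota_pow_P ps r \<in> carrier TT"
  and iota_pow_Q_closed [simp]:
  "set qs \<subseteq> carrier Q \<Longrightarrow> r \<in> carrier R \<Longrightarrow> iota_pow_Q qs r \<in> carrier TT"
  by simp_all

text \<open>The scalar argument of \<open>iota_pow\<close> only matters for the empty word, where it is absorbed
  into the new letter.\<close>

lemma iota_pow_mult_Cons:
  assumes "iX x \<in> carrier TT" "iX x' = iX x \<otimes>\<^bsub>TT\<^esub> iR r" "set (map iX xs) \<subseteq> carrier TT" "r \<in> carrier R"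
  shows "iX x \<otimes>\<^bsub>TT\<^esub> iota_pow TT iR iX xs r = iota_pow TT iR iX ((if xs = [] then x' else x) # xs) r"
  using assms by (cases xs) (simp_all add: iota_pow_def)

lemma iR_one_mult_iota_pow_Cons:
  assumes "iR \<one>\<^bsub>R\<^esub> \<otimes>\<^bsub>TT\<^esub> iX x = iX x" "iX x \<in> carrier TT" "set (map iX xs) \<subseteq> carrier TT"
  shows "iR \<one>\<^bsub>R\<^esub> \<otimes>\<^bsub>TT\<^esub> iota_pow TT iR iX (x # xs) r = iota_pow TT iR iX (x # xs) r"
  using assms by (simp add: iota_pow_def T.m_assoc[symmetric])

lemma monomial_in_grading:
  "set qs \<subseteq> carrier Q \<Longrightarrow> set ps \<subseteq> carrier P \<Longrightarrow> r1 \<in> carrier R \<Longrightarrow> r2 \<in> carrier R \<Longrightarrow>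
   i = int (length qs) - int (length ps) \<Longrightarrow> monomial qs r1 ps r2 \<in> grading i"
  unfolding toeplitz_grading_def toeplitz_gens_def by (rule add_span.gen) blast

lemma iR_mult_monomial_in_grading:
  "r \<in> carrier R \<Longrightarrow> set qs \<subseteq> carrier Q \<Longrightarrow> set ps \<subseteq> carrier P \<Longrightarrow> r1 \<in> carrier R \<Longrightarrow>
   r2 \<in> carrier R \<Longrightarrow> i = int (length qs) - int (length ps) \<Longrightarrow>
   iR r \<otimes>\<^bsub>TT\<^esub> monomial qs r1 ps r2 \<in> grading i"
  unfolding toeplitz_grading_def toeplitz_gens_def by (rule add_span.gen) blast

lemma toeplitz_gensE:
  assumes "g \<in> gens i"
  obtains (monomial) qs ps r1 r2 where "g = monomial qs r1 ps r2"
     "set qs \<subseteq> carrier Q" "set ps \<subseteq> carrier P" "r1 \<in> carrier R" "r2 \<in> carrier R"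
     "i = int (length qs) - int (length ps)"
  | (scaled) r qs ps r1 r2 where "g = iR r \<otimes>\<^bsub>TT\<^esub> monomial qs r1 ps r2" "r \<in> carrier R"
     "set qs \<subseteq> carrier Q" "set ps \<subseteq> carrier P" "r1 \<in> carrier R" "r2 \<in> carrier R"
     "i = int (length qs) - int (length ps)"
  using assms unfolding toeplitz_gens_def by blast

lemma toeplitz_gens_closed: "gens i \<subseteq> carrier TT"
proof
  fix g assume "g \<in> gens i"
  then show "g \<in> carrier TT" by (cases rule: toeplitz_gensE) auto
qed

lemma additive_subgroup_grading: "additive_subgroup (grading i) TT"
  unfolding toeplitz_grading_def using toeplitz_gens_closed by (rule T.additive_subgroup_add_span)

lemma grading_closed [simp]: "h \<in> grading i \<Longrightarrow> h \<in> carrier TT"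
  using additive_subgroup.a_Hcarr[OF additive_subgroup_grading] .

lemma mult_grading_if_mult_gens:
  assumes "x \<in> carrier TT" and "\<And>g. g \<in> gens i \<Longrightarrow> x \<otimes>\<^bsub>TT\<^esub> g \<in> grading j" and "h \<in> grading i"
  shows "x \<otimes>\<^bsub>TT\<^esub> h \<in> grading j"
  using T.add_span_mult_left_closed[OF additive_subgroup_grading toeplitz_gens_closed assms(1,2)]
        assms(3) unfolding toeplitz_grading_def by blast

lemma mult_grading_if_gens_mult:
  assumes "x \<in> carrier TT" and "\<And>g. g \<in> gens i \<Longrightarrow> g \<otimes>\<^bsub>TT\<^esub> x \<in> grading j" and "h \<in> grading i"
  shows "h \<otimes>\<^bsub>TT\<^esub> x \<in> grading j"
  using T.add_span_mult_right_closed[OF additive_subgroup_grading toeplitz_gens_closed assms(1,2)]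
        assms(3) unfolding toeplitz_grading_def by blast

lemma iR_mult_grading: "r \<in> carrier R \<Longrightarrow> h \<in> grading i \<Longrightarrow> iR r \<otimes>\<^bsub>TT\<^esub> h \<in> grading i"
proof (rule mult_grading_if_mult_gens)
  fix g assume r: "r \<in> carrier R" and "g \<in> gens i"
  from \<open>g \<in> gens i\<close> show "iR r \<otimes>\<^bsub>TT\<^esub> g \<in> grading i"
  proof (cases rule: toeplitz_gensE)
    case (scaled r' qs ps r1 r2)
    have "iR r \<otimes>\<^bsub>TT\<^esub> g = iR (r \<otimes>\<^bsub>R\<^esub> r') \<otimes>\<^bsub>TT\<^esub> monomial qs r1 ps r2"
      using scaled r by (simp add: iR_mult T.m_assoc)
    then show ?thesis using scaled r by (auto intro!: iR_mult_monomial_in_grading)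
  qed (use r in \<open>auto intro!: iR_mult_monomial_in_grading\<close>)
qed simp

lemma iQ_mult_monomial:
  assumes q: "q \<in> carrier Q"
    and c: "set qs \<subseteq> carrier Q" "set ps \<subseteq> carrier P" "r1 \<in> carrier R" "r2 \<in> carrier R"
  shows "iQ q \<otimes>\<^bsub>TT\<^esub> monomial qs r1 ps r2 \<in> grading (int (length qs) - int (length ps) + 1)"
proof -
  let ?q' = "if qs = [] then ract Q q r1 else q"
  have "iQ q \<otimes>\<^bsub>TT\<^esub> monomial qs r1 ps r2 = (iQ q \<otimes>\<^bsub>TT\<^esub> iota_pow_Q qs r1) \<otimes>\<^bsub>TT\<^esub> iota_pow_P ps r2"
    using q c by (simp add: T.m_assoc)
  also have "iQ q \<otimes>\<^bsub>TT\<^esub> iota_pow_Q qs r1 = iota_pow_Q (?q' # qs) r1"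
    by (rule iota_pow_mult_Cons) (use q c in \<open>simp_all add: iQ_ract\<close>)
  finally have "iQ q \<otimes>\<^bsub>TT\<^esub> monomial qs r1 ps r2 = monomial (?q' # qs) r1 ps r2" .
  moreover have "?q' \<in> carrier Q" using q c by simp
  ultimately show ?thesis using c by (auto intro!: monomial_in_grading)
qed

lemma iP_mult_monomial:
  assumes p: "p \<in> carrier P"
    and c: "set qs \<subseteq> carrier Q" "set ps \<subseteq> carrier P" "r1 \<in> carrier R" "r2 \<in> carrier R"
  shows "iP p \<otimes>\<^bsub>TT\<^esub> monomial qs r1 ps r2 \<in> grading (int (length qs) - int (length ps) - 1)"
proof (cases qs)
  case Nil
  let ?p' = "ract P p r1"
  let ?p'' = "if ps = [] then ract P ?p' r2 else ?p'"
  have "iP p \<otimes>\<^bsub>TT\<^esub> monomial qs r1 ps r2 = iP ?p' \<otimes>\<^bsub>TT\<^esub> iota_pow_P ps r2"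
    using Nil p c by (simp add: iota_pow_def T.m_assoc[symmetric] iP_ract)
  also have "\<dots> = iota_pow_P (?p'' # ps) r2"
    using p c iota_pow_mult_Cons[of iP ?p' "ract P ?p' r2" r2 ps] by (auto simp: iP_ract)
  also have "\<dots> = monomial [] \<one>\<^bsub>R\<^esub> (?p'' # ps) r2"
    using p c iR_one_mult_iota_pow_Cons[of iP ?p'' ps r2] by (auto simp: iota_pow_def)
  finally show ?thesis using Nil p c by (auto intro!: monomial_in_grading)
next
  case (Cons q1 qs')
  have q1: "q1 \<in> carrier Q" and qs': "set qs' \<subseteq> carrier Q" using Cons c by auto
  have contract: "iP p \<otimes>\<^bsub>TT\<^esub> (iQ q1 \<otimes>\<^bsub>TT\<^esub> x) = iR (psi p q1) \<otimes>\<^bsub>TT\<^esub> x" if "x \<in> carrier TT" for x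
    using p q1 that by (simp add: iR_psi T.m_assoc)
  show ?thesis
  proof (cases qs')
    case Nil
    have "iP p \<otimes>\<^bsub>TT\<^esub> monomial qs r1 ps r2 = monomial [] (psi p q1) ps r2"
      using Cons Nil p q1 c contract by (simp add: iota_pow_def T.m_assoc[symmetric])
    then show ?thesis using Cons Nil p q1 c by (auto intro!: monomial_in_grading)
  next
    case (Cons q2 qs'')
    have "iP p \<otimes>\<^bsub>TT\<^esub> monomial qs r1 ps r2 = iR (psi p q1) \<otimes>\<^bsub>TT\<^esub> monomial qs' r1 ps r2"
      using \<open>qs = q1 # qs'\<close> Cons p q1 qs' c contract by (simp add: iota_pow_def T.m_assoc)
    then show ?thesis
      using \<open>qs = q1 # qs'\<close> p q1 qs' c by (auto intro!: iR_mult_monomial_in_grading)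
  qed
qed

lemma iQ_mult_grading: "q \<in> carrier Q \<Longrightarrow> h \<in> grading i \<Longrightarrow> iQ q \<otimes>\<^bsub>TT\<^esub> h \<in> grading (i + 1)"
proof (rule mult_grading_if_mult_gens)
  fix g assume q: "q \<in> carrier Q" and "g \<in> gens i"
  from \<open>g \<in> gens i\<close> show "iQ q \<otimes>\<^bsub>TT\<^esub> g \<in> grading (i + 1)"
  proof (cases rule: toeplitz_gensE)
    case (scaled r qs ps r1 r2)
    then have "iQ q \<otimes>\<^bsub>TT\<^esub> g = iQ (ract Q q r) \<otimes>\<^bsub>TT\<^esub> monomial qs r1 ps r2"
      using q by (simp add: iQ_ract T.m_assoc)
    then show ?thesis using scaled q iQ_mult_monomial by simp
  qed (use q iQ_mult_monomial in simp)
qed simp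

lemma iP_mult_grading: "p \<in> carrier P \<Longrightarrow> h \<in> grading i \<Longrightarrow> iP p \<otimes>\<^bsub>TT\<^esub> h \<in> grading (i - 1)"
proof (rule mult_grading_if_mult_gens)
  fix g assume p: "p \<in> carrier P" and "g \<in> gens i"
  from \<open>g \<in> gens i\<close> show "iP p \<otimes>\<^bsub>TT\<^esub> g \<in> grading (i - 1)"
  proof (cases rule: toeplitz_gensE)
    case (scaled r qs ps r1 r2)
    then have "iP p \<otimes>\<^bsub>TT\<^esub> g = iP (ract P p r) \<otimes>\<^bsub>TT\<^esub> monomial qs r1 ps r2"
      using p by (simp add: iP_ract T.m_assoc)
    then show ?thesis using scaled p iP_mult_monomial by simp
  qed (use p iP_mult_monomial in simp)
qed simp

lemma list_prod_iQ_mult_grading: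
  "set qs \<subseteq> carrier Q \<Longrightarrow> h \<in> grading i \<Longrightarrow>
   list_prod TT (map iQ qs) \<otimes>\<^bsub>TT\<^esub> h \<in> grading (i + int (length qs))"
proof (induction qs)
  case (Cons q qs)
  then have "iQ q \<otimes>\<^bsub>TT\<^esub> (list_prod TT (map iQ qs) \<otimes>\<^bsub>TT\<^esub> h) \<in> grading (i + int (length qs) + 1)"
    by (simp add: iQ_mult_grading)
  then show ?case using Cons.prems by (simp add: T.m_assoc ac_simps)
qed simp

lemma list_prod_iP_mult_grading:
  "set ps \<subseteq> carrier P \<Longrightarrow> h \<in> grading i \<Longrightarrow>
   list_prod TT (map iP ps) \<otimes>\<^bsub>TT\<^esub> h \<in> grading (i - int (length ps))"
proof (induction ps)
  case (Cons p ps)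
  then have "iP p \<otimes>\<^bsub>TT\<^esub> (list_prod TT (map iP ps) \<otimes>\<^bsub>TT\<^esub> h) \<in> grading (i - int (length ps) - 1)"
    by (simp add: iP_mult_grading)
  then show ?case using Cons.prems by (simp add: T.m_assoc algebra_simps)
qed simp

lemma iota_pow_Q_mult_grading:
  "set qs \<subseteq> carrier Q \<Longrightarrow> r \<in> carrier R \<Longrightarrow> h \<in> grading i \<Longrightarrow>
   iota_pow_Q qs r \<otimes>\<^bsub>TT\<^esub> h \<in> grading (i + int (length qs))"
  unfolding iota_pow_def using list_prod_iQ_mult_grading iR_mult_grading by auto

lemma iota_pow_P_mult_grading:
  "set ps \<subseteq> carrier P \<Longrightarrow> r \<in> carrier R \<Longrightarrow> h \<in> grading i \<Longrightarrow>
   iota_pow_P ps r \<otimes>\<^bsub>TT\<^esub> h \<in> grading (i - int (length ps))"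
  unfolding iota_pow_def using list_prod_iP_mult_grading iR_mult_grading by auto

lemma monomial_mult_grading:
  assumes "set qs \<subseteq> carrier Q" "set ps \<subseteq> carrier P" "r1 \<in> carrier R" "r2 \<in> carrier R"
    and "h \<in> grading i"
  shows "monomial qs r1 ps r2 \<otimes>\<^bsub>TT\<^esub> h \<in> grading (int (length qs) - int (length ps) + i)"
proof -
  have "iota_pow_Q qs r1 \<otimes>\<^bsub>TT\<^esub> (iota_pow_P ps r2 \<otimes>\<^bsub>TT\<^esub> h)
          \<in> grading (i - int (length ps) + int (length qs))"
    using assms by (intro iota_pow_Q_mult_grading iota_pow_P_mult_grading)
  then show ?thesis using assms by (simp add: T.m_assoc algebra_simps)
qed

lemma grading_mult: "g \<in> grading a \<Longrightarrow> h \<in> grading b \<Longrightarrow> g \<otimes>\<^bsub>TT\<^esub> h \<in> grading (a + b)"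
proof (rule mult_grading_if_gens_mult)
  fix s assume h: "h \<in> grading b" and "s \<in> gens a"
  from \<open>s \<in> gens a\<close> show "s \<otimes>\<^bsub>TT\<^esub> h \<in> grading (a + b)"
  proof (cases rule: toeplitz_gensE)
    case (monomial qs ps r1 r2)
    then show ?thesis using h monomial_mult_grading by simp
  next
    case (scaled r qs ps r1 r2)
    then show ?thesis using h monomial_mult_grading iR_mult_grading by (simp add: T.m_assoc)
  qed
qed simp

lemma graded_ring_toeplitz: "graded_ring TT grading"
  by (intro graded_ring.intro graded_ring_axioms.intro T.ring_axioms additive_subgroup_grading grading_mult)

lemma iR_one_mult_gens:
  assumes "g \<in> gens i"
  shows "iR \<one>\<^bsub>R\<^esub> \<otimes>\<^bsub>TT\<^esub> g = g"
  using assms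
proof (cases rule: toeplitz_gensE)
  case (monomial qs ps r1 r2)
  then show ?thesis
    using iR_one_mult_iota_pow_Cons[of iQ _ _ r1]
    by (cases qs) (simp_all add: iota_pow_def T.m_assoc[symmetric] iR_mult[symmetric])
next
  case (scaled r qs ps r1 r2)
  then show ?thesis by (simp add: T.m_assoc[symmetric] iR_mult[symmetric])
qed

lemma list_prod_iP_mult_iR_one:
  "ps \<noteq> [] \<Longrightarrow> set ps \<subseteq> carrier P \<Longrightarrow>
   list_prod TT (map iP ps) \<otimes>\<^bsub>TT\<^esub> iR \<one>\<^bsub>R\<^esub> = list_prod TT (map iP ps)"
proof (induction ps)
  case (Cons p ps)
  then show ?case by (cases ps) (simp_all add: T.m_assoc)
qed simp

lemma iota_pow_P_mult_iR_one:
  "set ps \<subseteq> carrier P \<Longrightarrow> r \<in> carrier R \<Longrightarrow> iota_pow_P ps r \<otimes>\<^bsub>TT\<^esub> iR \<one>\<^bsub>R\<^esub> = iota_pow_P ps r"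
  using list_prod_iP_mult_iR_one[of ps] by (simp add: iota_pow_def iR_mult[symmetric])

lemma gens_mult_iR_one:
  assumes "g \<in> gens i"
  shows "g \<otimes>\<^bsub>TT\<^esub> iR \<one>\<^bsub>R\<^esub> = g"
  using assms
  by (cases rule: toeplitz_gensE) (simp_all add: T.m_assoc iota_pow_P_mult_iR_one)

lemma iR_one_mult_grading: "h \<in> grading i \<Longrightarrow> iR \<one>\<^bsub>R\<^esub> \<otimes>\<^bsub>TT\<^esub> h = h"
  using add_span_subset[OF T.additive_subgroup_left_fixed, of "iR \<one>\<^bsub>R\<^esub>" "gens i"]
        iR_one_mult_gens toeplitz_gens_closed
  unfolding toeplitz_grading_def by auto

lemma grading_mult_iR_one: "h \<in> grading i \<Longrightarrow> h \<otimes>\<^bsub>TT\<^esub> iR \<one>\<^bsub>R\<^esub> = h"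
  using add_span_subset[OF T.additive_subgroup_right_fixed, of "iR \<one>\<^bsub>R\<^esub>" "gens i"]
        gens_mult_iR_one toeplitz_gens_closed
  unfolding toeplitz_grading_def by auto

lemma iR_one_in_grading: "iR \<one>\<^bsub>R\<^esub> \<in> grading 0"
  using monomial_in_grading[of "[]" "[]" "\<one>\<^bsub>R\<^esub>" "\<one>\<^bsub>R\<^esub>"]
  by (simp add: iota_pow_def iR_mult[symmetric])

lemma iQ_in_grading: "q \<in> carrier Q \<Longrightarrow> iQ q \<in> grading 1"
  using monomial_in_grading[of "[q]" "[]" "\<one>\<^bsub>R\<^esub>" "\<one>\<^bsub>R\<^esub>"] by (simp add: iota_pow_def)

lemma iP_in_grading: "p \<in> carrier P \<Longrightarrow> iP p \<in> grading (-1)"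
  using monomial_in_grading[of "[]" "[p]" "\<one>\<^bsub>R\<^esub>" "\<one>\<^bsub>R\<^esub>"] by (simp add: iota_pow_def)

lemma iR_one_in_graded_product_if_psi_surjective:
  assumes "psi_surjective R P Q psi"
  shows "iR \<one>\<^bsub>R\<^esub> \<in> graded_product TT grading (-1) 1"
proof -
  let ?\<Psi> = "{psi p q | p q. p \<in> carrier P \<and> q \<in> carrier Q}"
  have gens: "iR ` ?\<Psi> \<subseteq> {x \<otimes>\<^bsub>TT\<^esub> y | x y. x \<in> grading (-1) \<and> y \<in> grading 1}"
  proof clarify
    fix p q assume "p \<in> carrier P" "q \<in> carrier Q"
    then show "\<exists>x y. iR (psi p q) = x \<otimes>\<^bsub>TT\<^esub> y \<and> x \<in> grading (-1) \<and> y \<in> grading 1"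
      using iR_psi iP_in_grading iQ_in_grading by blast
  qed
  have "iR ` add_span R ?\<Psi> \<subseteq> add_span TT (iR ` ?\<Psi>)"
    by (rule add_span_image[OF rng_hom_imp_abelian_group_hom[OF R.ring_axioms T.ring_axioms iR_rng_hom]])
       auto
  moreover have "\<one>\<^bsub>R\<^esub> \<in> add_span R ?\<Psi>"
    using assms unfolding psi_surjective_def by blast
  ultimately have "iR \<one>\<^bsub>R\<^esub> \<in> add_span TT (iR ` ?\<Psi>)" by blast
  with add_span_mono[OF gens] show ?thesis
    unfolding graded_product_def by (rule subsetD)
qed

lemma pi_graph_snd_in_graded_product:
  assumes "(f, b) \<in> pi_graph P Q psi iQ iP TT"
  shows "b \<in> graded_product TT grading 1 (-1)"
proof -
  have "{iQ q \<otimes>\<^bsub>TT\<^esub> iP p | q p. q \<in> carrier Q \<and> p \<in> carrier P}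
          \<subseteq> {x \<otimes>\<^bsub>TT\<^esub> y | x y. x \<in> grading 1 \<and> y \<in> grading (-1)}"
    using iQ_in_grading iP_in_grading by blast
  from add_span_mono[OF this] pi_graph_snd_in_add_span[OF assms] show ?thesis
    unfolding graded_product_def by (rule subsetD)
qed

lemma pi_graph_snd_closed:
  assumes "(f, b) \<in> pi_graph P Q psi iQ iP TT"
  shows "b \<in> carrier TT"
proof -
  have "b \<in> grading (1 + -1)"
    using graded_ring.graded_product_subset[OF graded_ring_toeplitz]
          pi_graph_snd_in_graded_product[OF assms] by (rule subsetD)
  then show ?thesis by (rule grading_closed)
qed

lemma TJ_generators_closed:
  "J \<subseteq> carrier R \<Longrightarrow>
   {iR x \<ominus>\<^bsub>TT\<^esub> b | x b. x \<in> J \<and> (Delta Q x, b) \<in> pi_graph P Q psi iQ iP TT} \<subseteq> carrier TT"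
proof clarify
  fix x b assume "J \<subseteq> carrier R" "x \<in> J" "(Delta Q x, b) \<in> pi_graph P Q psi iQ iP TT"
  then show "iR x \<ominus>\<^bsub>TT\<^esub> b \<in> carrier TT"
    by (auto intro!: T.minus_closed dest: pi_graph_snd_closed)
qed

lemma ideal_TJ_ideal: "J \<subseteq> carrier R \<Longrightarrow> ideal (TJ_ideal R P Q psi iP iQ iR TT J) TT"
  unfolding TJ_ideal_def by (rule T.genideal_ideal[OF TJ_generators_closed])

lemma iR_one_coset_in_graded_product:
  assumes "psi_compatible R P Q psi J" and "\<one>\<^bsub>R\<^esub> \<in> J"
  defines "I \<equiv> TJ_ideal R P Q psi iP iQ iR TT J"
  shows "I +>\<^bsub>TT\<^esub> iR \<one>\<^bsub>R\<^esub> \<in> (\<lambda>x. I +>\<^bsub>TT\<^esub> x) ` graded_product TT grading 1 (-1)"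
proof -
  have J: "J \<subseteq> carrier R" "Delta Q \<one>\<^bsub>R\<^esub> \<in> FPQ P Q psi"
    using psi_compatible_subset_carrier[OF assms(1)] assms(1,2) unfolding psi_compatible_def by auto
  interpret I: ideal I TT
    unfolding I_def using J(1) by (rule ideal_TJ_ideal)
  obtain b where b: "(Delta Q \<one>\<^bsub>R\<^esub>, b) \<in> pi_graph P Q psi iQ iP TT"
    using FPQ_imp_pi_graph[OF J(2), where T = iQ and S = iP and B = TT] by blast
  have "iR \<one>\<^bsub>R\<^esub> \<ominus>\<^bsub>TT\<^esub> b
          \<in> {iR x \<ominus>\<^bsub>TT\<^esub> b | x b. x \<in> J \<and> (Delta Q x, b) \<in> pi_graph P Q psi iQ iP TT}"
    using assms(2) b by blast
  then have "iR \<one>\<^bsub>R\<^esub> \<ominus>\<^bsub>TT\<^esub> b \<in> I"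
    unfolding I_def TJ_ideal_def by (rule subsetD[OF T.genideal_self[OF TJ_generators_closed[OF J(1)]]])
  then have "I +>\<^bsub>TT\<^esub> iR \<one>\<^bsub>R\<^esub> = I +>\<^bsub>TT\<^esub> b"
    using T.quotient_eq_iff_same_a_r_cos[OF I.is_ideal iR_closed[OF R.one_closed] pi_graph_snd_closed[OF b]]
    by blast
  then show ?thesis using pi_graph_snd_in_graded_product[OF b] by blast
qed

end

theorem mainTheorem5:
  fixes R :: "'r ring"
    and P :: "('r, 'p) bimod"
    and Q :: "('r, 'q) bimod"
    and \<psi> :: "'p \<Rightarrow> 'q \<Rightarrow> 'r"
    and J :: "'r set"
    and iP :: "'p \<Rightarrow> 't" and iQ :: "'q \<Rightarrow> 't" and iR :: "'r \<Rightarrow> 't"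
    and TT :: "'t ring"
  assumes "unital_R_system R P Q \<psi>"
    and "cond_FS' P Q \<psi>"
    and "psi_compatible R P Q \<psi> J"
    and "\<one>\<^bsub>R\<^esub> \<in> J"
    and "psi_surjective R P Q \<psi>"
    and "toeplitz_rep R P Q \<psi> iP iQ iR TT"
  shows "strongly_graded (rel_CP_ring R P Q \<psi> iP iQ iR TT J)
                         (rel_CP_grading R P Q \<psi> iP iQ iR TT J)"
proof -
  interpret unital_cov_rep R P Q \<psi> iP iQ iR TT
    using assms(1,6) unfolding toeplitz_rep_def by unfold_locales blast+
  interpret graded_ring TT grading by (rule graded_ring_toeplitz)
  define I where "I = TJ_ideal R P Q \<psi> iP iQ iR TT J"
  have "ideal I TT"
    unfolding I_def by (rule ideal_TJ_ideal[OF psi_compatible_subset_carrier[OF assms(3)]])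
  have "strongly_graded (TT Quot I) (\<lambda>i. (\<lambda>x. I +>\<^bsub>TT\<^esub> x) ` grading i)"
  proof (rule strongly_graded_image_if_local_unit)
    show "ring_hom_ring TT (TT Quot I) (\<lambda>x. I +>\<^bsub>TT\<^esub> x)"
      using ideal.rcos_ring_hom_ring[OF \<open>ideal I TT\<close>] by simp
    show "I +>\<^bsub>TT\<^esub> iR \<one>\<^bsub>R\<^esub> \<in> (\<lambda>x. I +>\<^bsub>TT\<^esub> x) ` graded_product TT grading 1 (-1)"
      unfolding I_def by (rule iR_one_coset_in_graded_product[OF assms(3,4)])
    show "I +>\<^bsub>TT\<^esub> iR \<one>\<^bsub>R\<^esub> \<in> (\<lambda>x. I +>\<^bsub>TT\<^esub> x) ` graded_product TT grading (-1) 1"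
      using iR_one_in_graded_product_if_psi_surjective[OF assms(5)] by blast
  qed (use iR_one_in_grading iR_one_mult_grading grading_mult_iR_one in auto)
  then show ?thesis
    unfolding rel_CP_ring_def rel_CP_grading_def I_def .
qed

end
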